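(* Let $L=\mathcal{F}(P)$ be a finite distributive lattice and let $K$ be a cutting of $L$. Then for all $k$, $$d_k((L\boxplus K)\boxplus K)=d_k(L\boxplus K)+d_{k-2}(K)$$ and $$d_k^-(L\boxplus K)=d_k^-(L)+d_{k-1}^-(K).$$
   Context: For a finite poset $P$, $\mathcal{F}(P)$ is the set of filters (up-sets) of $P$ ordered by reverse inclusion; every finite distributive lattice is isomorphic to some $\mathcal{F}(P)$. A cutting of a finite distributive lattice $L$ is an interval $K=[\hat0_K,\hat1_K]$ of $L$ such that every maximal chain of $L$ meets $K$. For a cutting $K$ of $L=\mathcal{F}(P)$, let $S=\hat0_K\setminus\hat1_K$, $S_0$ the set of maximal elements of $P\setminus\hat0_K$, $S_1$ the set of minimal elements of $\hat1_K$. The poset $P_K$ is $P\cup\{x_K\}$ ($x_K$ new) where the order on $P$ is unchanged, $z<x_K$ iff $z\le s$ for some $s\in S_0$, $x_K<y$ iff $y\ge s$ for some $s\in S_1$, and $x_K$ is incomparable to every element of $S$; the convex expansion is $L\boxplus K:=\mathcal{F}(P_K)$. The lattice $(L\boxplus K)\boxplus K$ is the expansion of $L\boxplus K$ by the copy of $K$ in it, namely $\mathcal{F}(P')$ where $P'=P\cup\{x_1,x_2\}$ ($x_1,x_2$ new) with the order of $P$ unchanged, $x_1<x_2$, $z<x_1$ iff $z\le s$ for some $s\in S_0$, $x_2<y$ iff $y\ge s$ for some $s\in S_1$ (and then $z<x_2$, $x_1<y$ accordingly), and $x_1,x_2$ incomparable to every element of $S$. For a finite lattice $M$ and $a\in M$: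 $\deg^-_M(a)$ is the number of elements covering $a$, $\deg^+_M(a)$ the number of elements covered by $a$, $\deg_M(a)=\deg^-_M(a)+\deg^+_M(a)$; $d_k^-(M)$ (resp. $d_k(M)$) is the number of $a\in M$ with $\deg^-_M(a)=k$ (resp. $\deg_M(a)=k$), and these are $0$ for negative $k$. *)

theory Defs
  imports Main
begin

definition partial_order_on' :: "'a set \<Rightarrow> ('a \<Rightarrow> 'a \<Rightarrow> bool) \<Rightarrow> bool" where
  "partial_order_on' P le \<longleftrightarrow>
     (\<forall>x\<in>P. le x x) \<and>
     (\<forall>x\<in>P. \<forall>y\<in>P. le x y \<and> le y x \<longrightarrow> x = y) \<and>
     (\<forall>x\<in>P. \<forall>y\<in>P. \<forall>z\<in>P. le x y \<and> le y z \<longrightarrow> le x z)"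

definition filters :: "'a set \<Rightarrow> ('a \<Rightarrow> 'a \<Rightarrow> bool) \<Rightarrow> 'a set set" where
  "filters P le = {F. F \<subseteq> P \<and> (\<forall>x\<in>F. \<forall>y\<in>P. le x y \<longrightarrow> y \<in> F)}"

text \<open>The order of F(P): reverse inclusion.\<close>
definition rev_incl :: "'a set \<Rightarrow> 'a set \<Rightarrow> bool" where
  "rev_incl A B \<longleftrightarrow> B \<subseteq> A"

definition covers :: "'b set \<Rightarrow> ('b \<Rightarrow> 'b \<Rightarrow> bool) \<Rightarrow> 'b \<Rightarrow> 'b \<Rightarrow> bool" where
  "covers M le a b \<longleftrightarrow> a \<in> M \<and> b \<in> M \<and> le a b \<and> a \<noteq> b \<and>
     \<not> (\<exists>c\<in>M. le a c \<and> le c b \<and> c \<noteq> a \<and> c \<noteq> b)"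

definition deg_minus :: "'b set \<Rightarrow> ('b \<Rightarrow> 'b \<Rightarrow> bool) \<Rightarrow> 'b \<Rightarrow> nat" where
  "deg_minus M le a = card {b\<in>M. covers M le a b}"

definition deg_plus :: "'b set \<Rightarrow> ('b \<Rightarrow> 'b \<Rightarrow> bool) \<Rightarrow> 'b \<Rightarrow> nat" where
  "deg_plus M le a = card {b\<in>M. covers M le b a}"

definition deg :: "'b set \<Rightarrow> ('b \<Rightarrow> 'b \<Rightarrow> bool) \<Rightarrow> 'b \<Rightarrow> nat" where
  "deg M le a = deg_minus M le a + deg_plus M le a"

text \<open>d_k and d_k^-; indexed by integers, automatically 0 for negative k.\<close>
definition d_num :: "'b set \<Rightarrow> ('b \<Rightarrow> 'b \<Rightarrow> bool) \<Rightarrow> int \<Rightarrow> nat" where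
  "d_num M le k = card {a\<in>M. int (deg M le a) = k}"

definition d_minus_num :: "'b set \<Rightarrow> ('b \<Rightarrow> 'b \<Rightarrow> bool) \<Rightarrow> int \<Rightarrow> nat" where
  "d_minus_num M le k = card {a\<in>M. int (deg_minus M le a) = k}"

definition is_chain :: "'b set \<Rightarrow> ('b \<Rightarrow> 'b \<Rightarrow> bool) \<Rightarrow> 'b set \<Rightarrow> bool" where
  "is_chain M le C \<longleftrightarrow> C \<subseteq> M \<and> (\<forall>x\<in>C. \<forall>y\<in>C. le x y \<or> le y x)"

definition maximal_chain :: "'b set \<Rightarrow> ('b \<Rightarrow> 'b \<Rightarrow> bool) \<Rightarrow> 'b set \<Rightarrow> bool" where
  "maximal_chain M le C \<longleftrightarrow> is_chain M le C \<and> (\<forall>D. is_chain M le D \<and> C \<subseteq> D \<longrightarrow> D = C)"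

text \<open>The interval [lo, hi] of F(P) (lo = 0_K, hi = 1_K).\<close>
definition interval_F :: "'a set \<Rightarrow> ('a \<Rightarrow> 'a \<Rightarrow> bool) \<Rightarrow> 'a set \<Rightarrow> 'a set \<Rightarrow> 'a set set" where
  "interval_F P le lo hi = {F \<in> filters P le. rev_incl lo F \<and> rev_incl F hi}"

definition cutting :: "'a set \<Rightarrow> ('a \<Rightarrow> 'a \<Rightarrow> bool) \<Rightarrow> 'a set \<Rightarrow> 'a set \<Rightarrow> bool" where
  "cutting P le lo hi \<longleftrightarrow> lo \<in> filters P le \<and> hi \<in> filters P le \<and> rev_incl lo hi \<and>
     (\<forall>C. maximal_chain (filters P le) rev_incl C \<longrightarrow> C \<inter> interval_F P le lo hi \<noteq> {})"

definition S0 :: "'a set \<Rightarrow> ('a \<Rightarrow> 'a \<Rightarrow> bool) \<Rightarrow> 'a set \<Rightarrow> 'a set" where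
  "S0 P le lo = {x \<in> P - lo. \<forall>y\<in>P - lo. le x y \<longrightarrow> y = x}"

definition S1 :: "'a set \<Rightarrow> ('a \<Rightarrow> 'a \<Rightarrow> bool) \<Rightarrow> 'a set \<Rightarrow> 'a set" where
  "S1 P le hi = {x \<in> hi. \<forall>y\<in>hi. le y x \<longrightarrow> y = x}"

text \<open>P_K on type 'a option: Some p is p, None is the new element x_K.\<close>
definition PK :: "'a set \<Rightarrow> 'a option set" where
  "PK P = Some ` P \<union> {None}"

fun leK :: "'a set \<Rightarrow> ('a \<Rightarrow> 'a \<Rightarrow> bool) \<Rightarrow> 'a set \<Rightarrow> 'a set \<Rightarrow> 'a option \<Rightarrow> 'a option \<Rightarrow> bool" where
  "leK P le lo hi (Some a) (Some b) = le a b"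
| "leK P le lo hi (Some a) None = (\<exists>s\<in>S0 P le lo. le a s)"
| "leK P le lo hi None (Some b) = (\<exists>s\<in>S1 P le hi. le s b)"
| "leK P le lo hi None None = True"

text \<open>P' for the double expansion: Old p is p, X1, X2 are the new elements x_1 < x_2.\<close>
datatype 'a ext2 = Old 'a | X1 | X2

definition P2 :: "'a set \<Rightarrow> 'a ext2 set" where
  "P2 P = Old ` P \<union> {X1, X2}"

fun le2 :: "'a set \<Rightarrow> ('a \<Rightarrow> 'a \<Rightarrow> bool) \<Rightarrow> 'a set \<Rightarrow> 'a set \<Rightarrow> 'a ext2 \<Rightarrow> 'a ext2 \<Rightarrow> bool" where
  "le2 P le lo hi (Old a) (Old b) = le a b"
| "le2 P le lo hi (Old a) X1 = (\<exists>s\<in>S0 P le lo. le a s)"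
| "le2 P le lo hi (Old a) X2 = (\<exists>s\<in>S0 P le lo. le a s)"
| "le2 P le lo hi X1 (Old b) = (\<exists>s\<in>S1 P le hi. le s b)"
| "le2 P le lo hi X2 (Old b) = (\<exists>s\<in>S1 P le hi. le s b)"
| "le2 P le lo hi X1 X1 = True"
| "le2 P le lo hi X1 X2 = True"
| "le2 P le lo hi X2 X1 = False"
| "le2 P le lo hi X2 X2 = True"

end

theory Submission
  imports Defs
begin

(* Covers in a lattice of filters ordered by reverse inclusion are exactly the one-point
   removals, so the degrees of a filter count the points that can be removed from it or added
   to it.  Since K is a cutting, every filter of P is either contained in 0_K or contains 1_K;
   call these families A and B, so that K = A \<inter> B.  The filters of P_K are then the G in A
   together with the G \<union> {x_K} for G in B, and those of P' are G (G in A), G \<union> {x_2} (G in K)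
   and G \<union> {x_1, x_2} (G in B).  Counting removable and addable points: G and G \<union> {x_1, x_2}
   have the same degrees in the double expansion as G and G \<union> {x_K} in L \<boxplus> K, while
   G \<union> {x_2} has its degree in K plus 2 (x_2 is removable and x_1 addable).  For the down-degree,
   x_K is removable from G \<union> {x_K} exactly when G lies in K, and a filter in B but not in A
   contains a point outside 0_K below all of 1_K, so the points of 1_K are not removable. *)

lemma partial_order_on'D:
  assumes "partial_order_on' P le"
  shows partial_order_on'_refl: "x \<in> P \<Longrightarrow> le x x"
    and partial_order_on'_antisym: "x \<in> P \<Longrightarrow> y \<in> P \<Longrightarrow> le x y \<Longrightarrow> le y x \<Longrightarrow> x = y"
    and partial_order_on'_trans: "x \<in> P \<Longrightarrow> y \<in> P \<Longrightarrow> z \<in> P \<Longrightarrow> le x y \<Longrightarrow> le y z \<Longrightarrow> le x z"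
  using assms unfolding partial_order_on'_def by blast+

lemma ex_minimal_below:
  assumes po: "partial_order_on' P le" and fin: "finite X" and XP: "X \<subseteq> P" and x: "x \<in> X"
  shows "\<exists>m\<in>X. le m x \<and> (\<forall>y\<in>X. le y m \<longrightarrow> y = m)"
proof -
  have "le x x" using partial_order_on'_refl[OF po] x XP by blast
  then obtain m where m: "m \<in> X" "le m x"
    and least: "\<And>z. z \<in> X \<Longrightarrow> le z x \<Longrightarrow> card {y\<in>X. le y m} \<le> card {y\<in>X. le y z}"
    using ex_has_least_nat[of "\<lambda>m. m \<in> X \<and> le m x" x "\<lambda>m. card {y\<in>X. le y m}"] x by blast
  have "y = m" if y: "y \<in> X" "le y m" for y
  proof (rule ccontr)
    assume "y \<noteq> m"
    then have "m \<notin> {z\<in>X. le z y}"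
      using partial_order_on'_antisym[OF po] y m XP by blast
    moreover have "m \<in> {z\<in>X. le z m}" using partial_order_on'_refl[OF po] m XP by blast
    moreover have "{z\<in>X. le z y} \<subseteq> {z\<in>X. le z m}"
      using partial_order_on'_trans[OF po] y m XP by blast
    ultimately have "card {z\<in>X. le z y} < card {z\<in>X. le z m}"
      using fin by (intro psubset_card_mono) auto
    moreover have "le y x" using partial_order_on'_trans[OF po] y m x XP by blast
    ultimately show False using least[of y] y by simp
  qed
  then show ?thesis using m by blast
qed

lemma ex_maximal_above:
  assumes "partial_order_on' P le" "finite X" "X \<subseteq> P" "x \<in> X"
  shows "\<exists>m\<in>X. le x m \<and> (\<forall>y\<in>X. le m y \<longrightarrow> y = m)"
proof -
  have "partial_order_on' P (\<lambda>a b. le b a)"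
    using assms(1) unfolding partial_order_on'_def by blast
  from ex_minimal_below[OF this assms(2-4)] show ?thesis .
qed

lemma ex_maximal_chain_containing:
  assumes "finite M" "F \<in> M" "R F F"
  shows "\<exists>C. maximal_chain M R C \<and> F \<in> C"
proof -
  let ?X = "{C. is_chain M R C \<and> F \<in> C}"
  have "?X \<subseteq> Pow M" by (auto simp: is_chain_def)
  then have "finite ?X" using assms(1) by (simp add: finite_subset)
  moreover have "{F} \<in> ?X" using assms(2,3) by (simp add: is_chain_def)
  ultimately obtain C where C: "C \<in> ?X" and max: "\<forall>D\<in>?X. C \<subseteq> D \<longrightarrow> C = D"
    using finite_has_maximal2 by (metis (no_types, lifting))
  have "D = C" if "is_chain M R D" "C \<subseteq> D" for D
    using max that C by blast
  then show ?thesis using C unfolding maximal_chain_def by blast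
qed

lemma card_filter_cong: "(\<And>x. x \<in> S \<Longrightarrow> P x \<longleftrightarrow> Q x) \<Longrightarrow> card {x\<in>S. P x} = card {x\<in>S. Q x}"
  by (rule arg_cong[where f = card]) blast

lemma card_filter_Un_disjoint:
  "finite S \<Longrightarrow> finite T \<Longrightarrow> S \<inter> T = {} \<Longrightarrow>
     card {x \<in> S \<union> T. Q x} = card {x\<in>S. Q x} + card {x\<in>T. Q x}"
  by (subst card_Un_disjoint[symmetric]) (auto intro: arg_cong[where f = card])

lemma card_filter_image:
  assumes "inj_on f X"
  shows "card {y \<in> f ` X. Q y} = card {x\<in>X. Q (f x)}"
proof -
  have "{y \<in> f ` X. Q y} = f ` {x\<in>X. Q (f x)}" by blast
  moreover have "inj_on f {x\<in>X. Q (f x)}" using assms by (rule inj_on_subset) blast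
  ultimately show ?thesis by (simp add: card_image)
qed

definition removable :: "'b set set \<Rightarrow> 'b set \<Rightarrow> 'b set" where
  "removable M a = {m\<in>a. a - {m} \<in> M}"

definition addable :: "'b set set \<Rightarrow> 'b set \<Rightarrow> 'b set" where
  "addable M a = {m. m \<notin> a \<and> insert m a \<in> M}"

definition set_deg :: "'b set set \<Rightarrow> 'b set \<Rightarrow> nat" where
  "set_deg M a = card (removable M a) + card (addable M a)"

definition stepwise :: "'b set set \<Rightarrow> bool" where
  "stepwise M \<longleftrightarrow> (\<forall>a\<in>M. \<forall>b\<in>M. b \<subset> a \<longrightarrow> (\<exists>m\<in>a - b. a - {m} \<in> M))"

lemma removable_subset: "removable M a \<subseteq> a"
  unfolding removable_def by blast

lemma addable_subset_Union: "addable M a \<subseteq> \<Union>M"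
  unfolding addable_def by blast

lemma stepwise_filters:
  assumes fin: "finite Q" and po: "partial_order_on' Q R"
  shows "stepwise (filters Q R)"
  unfolding stepwise_def
proof (intro ballI impI)
  fix a b assume a: "a \<in> filters Q R" and b: "b \<in> filters Q R" and "b \<subset> a"
  then obtain x where x: "x \<in> a - b" by blast
  have aQ: "a \<subseteq> Q" using a unfolding filters_def by blast
  then obtain m where m: "m \<in> a - b" and m_min: "\<forall>y\<in>a - b. R y m \<longrightarrow> y = m"
    using ex_minimal_below[OF po _ _ x] fin finite_subset by blast
  have "v \<in> a - {m}" if "u \<in> a - {m}" "v \<in> Q" "R u v" for u v
  proof -
    have "v \<in> a" using a that unfolding filters_def by blast
    moreover have "v \<noteq> m"
    proof
      assume "v = m"
      \<comment> \<open>by minimality of m, u lies in b, and then so does m\<close>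
      then have "u \<in> b" using m_min that by blast
      then show False using b m that \<open>v = m\<close> unfolding filters_def by blast
    qed
    ultimately show ?thesis by blast
  qed
  then have "a - {m} \<in> filters Q R" using aQ unfolding filters_def by blast
  then show "\<exists>m\<in>a - b. a - {m} \<in> filters Q R" using m by blast
qed

lemma stepwise_convex_subfamily:
  assumes "stepwise M" "N \<subseteq> M" "\<forall>a\<in>N. \<forall>b\<in>N. \<forall>c\<in>M. b \<subseteq> c \<and> c \<subseteq> a \<longrightarrow> c \<in> N"
  shows "stepwise N"
  unfolding stepwise_def
proof (intro ballI impI)
  fix a b assume ab: "a \<in> N" "b \<in> N" "b \<subset> a"
  then obtain m where m: "m \<in> a - b" "a - {m} \<in> M"
    using assms(1,2) unfolding stepwise_def by blast
  moreover have "b \<subseteq> a - {m}" "a - {m} \<subseteq> a" using ab m by auto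
  ultimately have "a - {m} \<in> N" using assms(3) ab by blast
  then show "\<exists>m\<in>a - b. a - {m} \<in> N" using m by blast
qed

lemma covers_rev_incl_iff:
  assumes "stepwise M"
  shows "covers M rev_incl a b \<longleftrightarrow> a \<in> M \<and> b \<in> M \<and> (\<exists>m\<in>a. b = a - {m})"
proof
  assume cov: "covers M rev_incl a b"
  then have ab: "a \<in> M" "b \<in> M" "b \<subset> a" unfolding covers_def rev_incl_def by auto
  then obtain m where m: "m \<in> a - b" "a - {m} \<in> M"
    using assms unfolding stepwise_def by blast
  moreover have "b \<subseteq> a - {m}" "a - {m} \<subseteq> a" "a - {m} \<noteq> a" using ab m by auto
  ultimately have "b = a - {m}" using cov unfolding covers_def rev_incl_def by blast
  then show "a \<in> M \<and> b \<in> M \<and> (\<exists>m\<in>a. b = a - {m})" using ab m by blast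
next
  assume "a \<in> M \<and> b \<in> M \<and> (\<exists>m\<in>a. b = a - {m})"
  then obtain m where "a \<in> M" "b \<in> M" "m \<in> a" "b = a - {m}" by blast
  moreover have "c = a \<or> c = a - {m}" if "a - {m} \<subseteq> c" "c \<subseteq> a" for c
    using that by (cases "m \<in> c") auto
  ultimately show "covers M rev_incl a b" unfolding covers_def rev_incl_def by blast
qed

lemma deg_minus_eq_card_removable:
  assumes "stepwise M" "a \<in> M"
  shows "deg_minus M rev_incl a = card (removable M a)"
proof -
  have "{b\<in>M. covers M rev_incl a b} = (\<lambda>m. a - {m}) ` removable M a"
    using assms by (auto simp: covers_rev_incl_iff removable_def)
  moreover have "inj_on (\<lambda>m. a - {m}) (removable M a)"
    unfolding removable_def by (rule inj_onI) blast
  ultimately show ?thesis unfolding deg_minus_def by (simp add: card_image)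
qed

lemma deg_plus_eq_card_addable:
  assumes "stepwise M" "a \<in> M"
  shows "deg_plus M rev_incl a = card (addable M a)"
proof -
  have "{b\<in>M. covers M rev_incl b a} = (\<lambda>m. insert m a) ` addable M a"
  proof (intro set_eqI iffI)
    fix b assume "b \<in> {b\<in>M. covers M rev_incl b a}"
    then obtain m where "b \<in> M" "m \<in> b" "a = b - {m}"
      using covers_rev_incl_iff[OF assms(1)] by blast
    then have "b \<in> M" "m \<notin> a" "b = insert m a" by blast+
    then have "m \<in> addable M a" "b = insert m a" unfolding addable_def by auto
    then show "b \<in> (\<lambda>m. insert m a) ` addable M a" by (rule rev_image_eqI)
  next
    fix b assume "b \<in> (\<lambda>m. insert m a) ` addable M a"
    then show "b \<in> {b\<in>M. covers M rev_incl b a}"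
      using covers_rev_incl_iff[OF assms(1)] assms(2) unfolding addable_def by blast
  qed
  moreover have "inj_on (\<lambda>m. insert m a) (addable M a)"
    unfolding addable_def by (rule inj_onI) blast
  ultimately show ?thesis unfolding deg_plus_def by (simp add: card_image)
qed

lemma deg_eq_set_deg: "stepwise M \<Longrightarrow> a \<in> M \<Longrightarrow> deg M rev_incl a = set_deg M a"
  by (simp add: deg_def set_deg_def deg_minus_eq_card_removable deg_plus_eq_card_addable)

lemma d_num_eq_card_set_deg:
  "stepwise M \<Longrightarrow> d_num M rev_incl k = card {a\<in>M. int (set_deg M a) = k}"
  unfolding d_num_def by (metis (lifting) deg_eq_set_deg)

lemma d_minus_num_eq_card_removable:
  "stepwise M \<Longrightarrow> d_minus_num M rev_incl k = card {a\<in>M. int (card (removable M a)) = k}"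
  unfolding d_minus_num_def by (metis (lifting) deg_minus_eq_card_removable)

lemma image_in_image_iff: "inj e \<Longrightarrow> e ` a \<in> image e ` M \<longleftrightarrow> a \<in> M"
  by (auto simp: inj_image_eq_iff)

lemma inj_on_image_of_inj: "inj e \<Longrightarrow> inj_on (image e) M"
  by (meson inj_image_eq_iff inj_onI)

lemma removable_image:
  assumes "inj e"
  shows "removable (image e ` M) (e ` a) = e ` removable M a"
proof -
  have "e ` a - {e m} = e ` (a - {m})" for m using assms by (simp add: image_set_diff)
  then show ?thesis
    using assms unfolding removable_def by (auto simp: inj_image_mem_iff inj_image_eq_iff)
qed

lemma addable_image:
  assumes "inj e"
  shows "addable (image e ` M) (e ` a) = e ` addable M a"
proof (intro set_eqI iffI)
  fix x assume "x \<in> addable (image e ` M) (e ` a)"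
  then obtain Y where Y: "x \<notin> e ` a" "insert x (e ` a) = e ` Y" "Y \<in> M"
    unfolding addable_def by blast
  then obtain m where "x = e m" by blast
  then have "e ` insert m a = e ` Y" "m \<notin> a" using Y by auto
  then have "insert m a = Y" by (simp only: inj_image_eq_iff[OF assms])
  then have "m \<in> addable M a" using Y(3) \<open>m \<notin> a\<close> unfolding addable_def by blast
  then show "x \<in> e ` addable M a" using \<open>x = e m\<close> by blast
next
  fix x assume "x \<in> e ` addable M a"
  then obtain m where "x = e m" "m \<notin> a" "insert m a \<in> M" unfolding addable_def by blast
  moreover have "insert (e m) (e ` a) \<in> image e ` M"
    using \<open>insert m a \<in> M\<close> by (rule rev_image_eqI) simp
  ultimately show "x \<in> addable (image e ` M) (e ` a)"
    using assms unfolding addable_def by (simp add: inj_image_mem_iff)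
qed

lemma set_deg_image:
  assumes "inj e"
  shows "set_deg (image e ` M) (e ` a) = set_deg M a"
  using assms unfolding set_deg_def
  by (simp add: removable_image addable_image card_image inj_on_subset)

lemma finite_Union_image: "finite (\<Union>M) \<Longrightarrow> finite (\<Union>(image e ` M))"
  by (simp add: image_Union[symmetric])

(* With n in no member of A or B, glue n A B stacks a copy of B, enlarged by n, on top of A. *)
definition glue :: "'b \<Rightarrow> 'b set set \<Rightarrow> 'b set set \<Rightarrow> 'b set set" where
  "glue n A B = A \<union> insert n ` B"

lemma mem_glue_lower: "n \<notin> a \<Longrightarrow> a \<in> glue n A B \<longleftrightarrow> a \<in> A"
  unfolding glue_def by auto

lemma mem_glue_upper:
  assumes "n \<notin> a" "n \<notin> \<Union>A" "n \<notin> \<Union>B"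
  shows "insert n a \<in> glue n A B \<longleftrightarrow> a \<in> B"
proof -
  have "insert n a = insert n b \<longleftrightarrow> a = b" if "b \<in> B" for b
    using assms that by (simp add: insert_ident)
  then show ?thesis using assms unfolding glue_def by auto
qed

lemma mem_glue_iff:
  assumes "n \<notin> \<Union>A" "n \<notin> \<Union>B"
  shows "X \<in> glue n A B \<longleftrightarrow> (if n \<in> X then X - {n} \<in> B else X \<in> A)"
proof (cases "n \<in> X")
  case True
  then have "X = insert n (X - {n})" by blast
  then show ?thesis using True assms mem_glue_upper[of n "X - {n}" A B] by (metis Diff_iff insertI1)
qed (simp add: mem_glue_lower)

lemma removable_glue_lower: "n \<notin> a \<Longrightarrow> removable (glue n A B) a = removable A a"
  unfolding removable_def by (auto simp: mem_glue_lower)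

lemma addable_glue_lower:
  assumes "n \<notin> a" "n \<notin> \<Union>A" "n \<notin> \<Union>B"
  shows "addable (glue n A B) a = (if a \<in> B then insert n (addable A a) else addable A a)"
proof -
  have "insert m a \<in> glue n A B \<longleftrightarrow> (if m = n then a \<in> B else insert m a \<in> A)" for m
    using mem_glue_lower[of n "insert m a" A B] mem_glue_upper[OF assms] assms(1) by auto
  then show ?thesis using assms(1,2) unfolding addable_def by auto
qed

lemma removable_glue_upper:
  assumes "n \<notin> a" "n \<notin> \<Union>A" "n \<notin> \<Union>B"
  shows "removable (glue n A B) (insert n a)
    = (if a \<in> A then insert n (removable B a) else removable B a)"
proof -
  have "insert n a - {m} \<in> glue n A B \<longleftrightarrow> a - {m} \<in> B" if "m \<in> a" for m
  proof -
    have "insert n a - {m} = insert n (a - {m})" using that assms(1) by auto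
    then show ?thesis using mem_glue_upper[of n "a - {m}" A B] assms by simp
  qed
  moreover have "insert n a - {n} \<in> glue n A B \<longleftrightarrow> a \<in> A"
    using mem_glue_lower[OF assms(1)] assms(1) by simp
  ultimately show ?thesis unfolding removable_def by auto
qed

lemma addable_glue_upper:
  assumes "n \<notin> a" "n \<notin> \<Union>A" "n \<notin> \<Union>B"
  shows "addable (glue n A B) (insert n a) = addable B a"
proof -
  have "insert m (insert n a) \<in> glue n A B \<longleftrightarrow> insert m a \<in> B" if "m \<noteq> n" "m \<notin> a" for m
    using mem_glue_upper[of n "insert m a" A B] assms that by (simp add: insert_commute)
  moreover have "insert n a \<notin> B" using assms(3) by blast
  ultimately show ?thesis unfolding addable_def by (metis insert_iff)
qed

lemma set_deg_glue_lower:
  assumes "n \<notin> a" "n \<notin> \<Union>A" "n \<notin> \<Union>B" "finite (\<Union>A)"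
  shows "set_deg (glue n A B) a = set_deg A a + (if a \<in> B then 1 else 0)"
proof -
  have "finite (addable A a)" "n \<notin> addable A a"
    using addable_subset_Union[of A a] assms(2,4) finite_subset by blast+
  then show ?thesis
    unfolding set_deg_def using assms
    by (simp add: removable_glue_lower addable_glue_lower)
qed

lemma card_removable_glue_upper:
  assumes "n \<notin> a" "n \<notin> \<Union>A" "n \<notin> \<Union>B" "finite a"
  shows "card (removable (glue n A B) (insert n a)) = card (removable B a) + (if a \<in> A then 1 else 0)"
proof -
  have "finite (removable B a)" "n \<notin> removable B a"
    using removable_subset[of B a] assms(1,4) finite_subset by blast+
  then show ?thesis using assms by (simp add: removable_glue_upper)
qed

lemma set_deg_glue_upper:
  assumes "n \<notin> a" "n \<notin> \<Union>A" "n \<notin> \<Union>B" "finite a"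
  shows "set_deg (glue n A B) (insert n a) = set_deg B a + (if a \<in> A then 1 else 0)"
  using assms unfolding set_deg_def by (simp add: card_removable_glue_upper addable_glue_upper)

lemma card_filter_glue:
  assumes "finite A" "finite B" "n \<notin> \<Union>A" "n \<notin> \<Union>B"
  shows "card {x \<in> glue n A B. Q x} = card {x\<in>A. Q x} + card {x\<in>B. Q (insert n x)}"
proof -
  have "card {x \<in> A \<union> insert n ` B. Q x} = card {x\<in>A. Q x} + card {x \<in> insert n ` B. Q x}"
    using assms by (intro card_filter_Un_disjoint) auto
  also have "card {x \<in> insert n ` B. Q x} = card {x\<in>B. Q (insert n x)}"
    using assms(4) by (intro card_filter_image inj_onI) (metis UnionI insert_ident)
  finally show ?thesis unfolding glue_def .
qed

lemma finite_Union_glue: "finite (\<Union>A) \<Longrightarrow> finite (\<Union>B) \<Longrightarrow> finite (\<Union>(glue n A B))"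
  unfolding glue_def by (auto intro: finite_subset[of _ "insert n (\<Union>B)"])

lemma Some_in_PK_iff [simp]: "Some a \<in> PK P \<longleftrightarrow> a \<in> P" and None_in_PK [simp]: "None \<in> PK P"
  unfolding PK_def by auto

lemma subset_PK_iff: "X \<subseteq> PK P \<longleftrightarrow> Some -` X \<subseteq> P"
  unfolding PK_def by (auto intro: option.exhaust)

lemma mem_image_Some_iff: "X \<in> image Some ` M \<longleftrightarrow> None \<notin> X \<and> Some -` X \<in> M"
proof
  show "None \<notin> X \<and> Some -` X \<in> M" if "X \<in> image Some ` M"
    using that by (auto simp: inj_vimage_image_eq)
  assume X: "None \<notin> X \<and> Some -` X \<in> M"
  have "X = Some ` (Some -` X)"
  proof (rule set_eqI)
    show "x \<in> X \<longleftrightarrow> x \<in> Some ` (Some -` X)" for x using X by (cases x) auto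
  qed
  then show "X \<in> image Some ` M" using X by (metis image_eqI)
qed

lemma Old_in_P2_iff [simp]: "Old a \<in> P2 P \<longleftrightarrow> a \<in> P" and X1_in_P2 [simp]: "X1 \<in> P2 P"
  and X2_in_P2 [simp]: "X2 \<in> P2 P"
  unfolding P2_def by auto

lemma subset_P2_iff: "X \<subseteq> P2 P \<longleftrightarrow> Old -` X \<subseteq> P"
proof
  show "Old -` X \<subseteq> P" if "X \<subseteq> P2 P" using that by auto
  show "X \<subseteq> P2 P" if "Old -` X \<subseteq> P"
  proof
    show "x \<in> P2 P" if "x \<in> X" for x using that \<open>Old -` X \<subseteq> P\<close> by (cases x) auto
  qed
qed

lemma inj_Old: "inj Old"
  by (simp add: inj_def)

lemma X1_notin_image_Old [simp]: "X1 \<notin> Old ` G" and X2_notin_image_Old [simp]: "X2 \<notin> Old ` G"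
  by auto

lemma mem_image_Old_iff: "X \<in> image Old ` M \<longleftrightarrow> X1 \<notin> X \<and> X2 \<notin> X \<and> Old -` X \<in> M"
proof
  show "X1 \<notin> X \<and> X2 \<notin> X \<and> Old -` X \<in> M" if "X \<in> image Old ` M"
    using that by (auto simp: inj_vimage_image_eq[OF inj_Old])
  assume X: "X1 \<notin> X \<and> X2 \<notin> X \<and> Old -` X \<in> M"
  have "X = Old ` (Old -` X)"
  proof (rule set_eqI)
    show "x \<in> X \<longleftrightarrow> x \<in> Old ` (Old -` X)" for x using X by (cases x) auto
  qed
  then show "X \<in> image Old ` M" using X by (metis image_eqI)
qed

locale poset_cutting =
  fixes P :: "'a set" and le :: "'a \<Rightarrow> 'a \<Rightarrow> bool" and lo hi :: "'a set"
  assumes finite_P: "finite P" and po: "partial_order_on' P le" and cut: "cutting P le lo hi"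
begin

abbreviation "L \<equiv> filters P le"
abbreviation "A \<equiv> {F\<in>L. F \<subseteq> lo}"
abbreviation "B \<equiv> {F\<in>L. hi \<subseteq> F}"
abbreviation "K \<equiv> interval_F P le lo hi"
abbreviation "LK \<equiv> filters (PK P) (leK P le lo hi)"
abbreviation "L2 \<equiv> filters (P2 P) (le2 P le lo hi)"

lemmas P_refl = partial_order_on'_refl[OF po]
  and P_antisym = partial_order_on'_antisym[OF po]
  and P_trans = partial_order_on'_trans[OF po]

lemma lo_in_L: "lo \<in> L" and hi_in_L: "hi \<in> L" and hi_subset_lo: "hi \<subseteq> lo"
  using cut unfolding cutting_def rev_incl_def by auto

lemma filter_subset_P: "F \<in> L \<Longrightarrow> F \<subseteq> P"
  unfolding filters_def by blast

lemma filter_up: "F \<in> L \<Longrightarrow> x \<in> F \<Longrightarrow> y \<in> P \<Longrightarrow> le x y \<Longrightarrow> y \<in> F"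
  unfolding filters_def by blast

lemma finite_Union_L: "M \<subseteq> L \<Longrightarrow> finite (\<Union>M)"
  using filter_subset_P finite_P by (meson Sup_least finite_subset subset_iff)

lemma finite_L: "finite L"
  using finite_Union_L[of L] by (simp add: finite_UnionD)

lemma finite_Union_A: "finite (\<Union>A)"
  and finite_Union_K: "finite (\<Union>K)" and finite_filter: "F \<in> L \<Longrightarrow> finite F"
  using finite_Union_L by (auto simp: interval_F_def finite_subset[OF _ finite_P] filter_subset_P)

lemma K_eq: "K = A \<inter> B"
  unfolding interval_F_def rev_incl_def by auto

lemma ex_S0_above_iff: "x \<in> P \<Longrightarrow> (\<exists>s\<in>S0 P le lo. le x s) \<longleftrightarrow> x \<notin> lo"
proof
  assume "x \<in> P" "\<exists>s\<in>S0 P le lo. le x s"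
  then show "x \<notin> lo" using filter_up[OF lo_in_L] unfolding S0_def by blast
next
  assume "x \<in> P" "x \<notin> lo"
  then obtain m where "m \<in> P - lo" "le x m" "\<forall>y\<in>P - lo. le m y \<longrightarrow> y = m"
    using ex_maximal_above[OF po, of "P - lo" x] finite_P by blast
  then show "\<exists>s\<in>S0 P le lo. le x s" unfolding S0_def by blast
qed

lemma ex_S1_below_iff: "y \<in> P \<Longrightarrow> (\<exists>s\<in>S1 P le hi. le s y) \<longleftrightarrow> y \<in> hi"
proof
  assume "y \<in> P" "\<exists>s\<in>S1 P le hi. le s y"
  then show "y \<in> hi" using filter_up[OF hi_in_L] unfolding S1_def by blast
next
  assume "y \<in> P" "y \<in> hi"
  moreover have "finite hi" "hi \<subseteq> P"
    using filter_subset_P[OF hi_in_L] finite_P finite_subset by blast+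
  ultimately obtain m where "m \<in> hi" "le m y" "\<forall>z\<in>hi. le z m \<longrightarrow> z = m"
    using ex_minimal_below[OF po, of hi y] by blast
  then show "\<exists>s\<in>S1 P le hi. le s y" unfolding S1_def by blast
qed

(* A maximal chain through the principal filter of z meets K in some G with 1_K \<subseteq> G \<subseteq> 0_K;
   G is comparable with the principal filter, which contains z \<notin> 0_K, so it contains G
   and hence y. *)
lemma le_if_notin_lo_in_hi:
  assumes z: "z \<in> P - lo" and y: "y \<in> hi"
  shows "le z y"
proof -
  let ?F = "{w\<in>P. le z w}"
  have "w' \<in> ?F" if "w \<in> ?F" "w' \<in> P" "le w w'" for w w'
    using P_trans[of z w w'] z that by blast
  then have "?F \<in> L" unfolding filters_def by blast
  then obtain C where C: "maximal_chain L rev_incl C" "?F \<in> C"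
    using ex_maximal_chain_containing[OF finite_L, of ?F rev_incl] by (auto simp: rev_incl_def)
  moreover have "C \<inter> K \<noteq> {}" if "maximal_chain L rev_incl C" for C
    using cut that unfolding cutting_def by blast
  ultimately obtain G where G: "G \<in> C" "G \<in> K" by blast
  moreover have "is_chain L rev_incl C" using C(1) unfolding maximal_chain_def by blast
  ultimately have "rev_incl G ?F \<or> rev_incl ?F G"
    using C(2) unfolding is_chain_def by blast
  then have "?F \<subseteq> G \<or> G \<subseteq> ?F" unfolding rev_incl_def .
  moreover have "G \<subseteq> lo" "hi \<subseteq> G" using G(2) unfolding interval_F_def rev_incl_def by auto
  moreover have "z \<in> ?F" using z P_refl by blast
  ultimately show "le z y" using z y by blast
qed

lemma L_eq: "L = A \<union> B"
proof -
  have "F \<subseteq> lo \<or> hi \<subseteq> F" if F: "F \<in> L" for F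
  proof (rule ccontr)
    assume "\<not> (F \<subseteq> lo \<or> hi \<subseteq> F)"
    then obtain z y where "z \<in> F" "z \<notin> lo" "y \<in> hi" "y \<notin> F" by blast
    moreover have "z \<in> P" "y \<in> P"
      using filter_subset_P[OF F] filter_subset_P[OF hi_in_L] \<open>z \<in> F\<close> \<open>y \<in> hi\<close> by auto
    ultimately show False using le_if_notin_lo_in_hi filter_up[OF F] by blast
  qed
  then show ?thesis by blast
qed

lemma leK_Some_None_iff: "a \<in> P \<Longrightarrow> leK P le lo hi (Some a) None \<longleftrightarrow> a \<notin> lo"
  and leK_None_Some_iff: "b \<in> P \<Longrightarrow> leK P le lo hi None (Some b) \<longleftrightarrow> b \<in> hi"
  and le2_Old_X1_iff: "a \<in> P \<Longrightarrow> le2 P le lo hi (Old a) X1 \<longleftrightarrow> a \<notin> lo"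
  and le2_Old_X2_iff: "a \<in> P \<Longrightarrow> le2 P le lo hi (Old a) X2 \<longleftrightarrow> a \<notin> lo"
  and le2_X1_Old_iff: "b \<in> P \<Longrightarrow> le2 P le lo hi X1 (Old b) \<longleftrightarrow> b \<in> hi"
  and le2_X2_Old_iff: "b \<in> P \<Longrightarrow> le2 P le lo hi X2 (Old b) \<longleftrightarrow> b \<in> hi"
  by (simp_all add: ex_S0_above_iff ex_S1_below_iff)

lemmas leK_iffs = leK_Some_None_iff leK_None_Some_iff
lemmas le2_iffs = le2_Old_X1_iff le2_Old_X2_iff le2_X1_Old_iff le2_X2_Old_iff

lemma partial_order_PK: "partial_order_on' (PK P) (leK P le lo hi)"
  unfolding partial_order_on'_def
proof (intro conjI ballI impI)
  fix x assume "x \<in> PK P"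
  then show "leK P le lo hi x x" using P_refl by (cases x) auto
next
  fix x y assume "x \<in> PK P" "y \<in> PK P" "leK P le lo hi x y \<and> leK P le lo hi y x"
  then show "x = y"
    by (cases x; cases y) (auto simp del: leK.simps(2,3) simp: leK_iffs intro: P_antisym dest: subsetD[OF hi_subset_lo])
next
  fix x y z assume "x \<in> PK P" "y \<in> PK P" "z \<in> PK P" "leK P le lo hi x y \<and> leK P le lo hi y z"
  then show "leK P le lo hi x z"
    by (cases x; cases y; cases z) (auto simp del: leK.simps(2,3) simp: leK_iffs
        intro: P_trans le_if_notin_lo_in_hi dest: filter_up[OF lo_in_L] filter_up[OF hi_in_L] subsetD[OF hi_subset_lo])
qed

lemma partial_order_P2: "partial_order_on' (P2 P) (le2 P le lo hi)"
  unfolding partial_order_on'_def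
proof (intro conjI ballI impI)
  fix x assume "x \<in> P2 P"
  then show "le2 P le lo hi x x" using P_refl by (cases x) auto
next
  fix x y assume "x \<in> P2 P" "y \<in> P2 P" "le2 P le lo hi x y \<and> le2 P le lo hi y x"
  then show "x = y"
    by (cases x; cases y) (auto simp del: le2.simps(2-5) simp: le2_iffs intro: P_antisym dest: subsetD[OF hi_subset_lo])
next
  fix x y z assume "x \<in> P2 P" "y \<in> P2 P" "z \<in> P2 P" "le2 P le lo hi x y \<and> le2 P le lo hi y z"
  then show "le2 P le lo hi x z"
    by (cases x; cases y; cases z) (auto simp del: le2.simps(2-5) simp: le2_iffs
        intro: P_trans le_if_notin_lo_in_hi dest: filter_up[OF lo_in_L] filter_up[OF hi_in_L] subsetD[OF hi_subset_lo])
qed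

lemma filters_PK_iff:
  "X \<in> LK \<longleftrightarrow> Some -` X \<in> L
     \<and> (None \<in> X \<longrightarrow> hi \<subseteq> Some -` X) \<and> (None \<notin> X \<longrightarrow> Some -` X \<subseteq> lo)"
proof
  assume "X \<in> LK"
  then have sub: "Some -` X \<subseteq> P"
    and up: "\<And>x y. x \<in> X \<Longrightarrow> y \<in> PK P \<Longrightarrow> leK P le lo hi x y \<Longrightarrow> y \<in> X"
    unfolding filters_def subset_PK_iff by blast+
  have "Some b \<in> X" if "Some a \<in> X" "b \<in> P" "le a b" for a b
    using up[of "Some a" "Some b"] that by simp
  then have "Some -` X \<in> L" using sub unfolding filters_def by blast
  moreover have "Some b \<in> X" if "None \<in> X" "b \<in> hi" for b
  proof -
    have "b \<in> P" using that(2) filter_subset_P[OF hi_in_L] by blast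
    then show ?thesis using up[of None "Some b"] that by (simp add: ex_S1_below_iff)
  qed
  moreover have "a \<in> lo" if "None \<notin> X" "Some a \<in> X" for a
  proof -
    have "a \<in> P" using that(2) sub by blast
    then show ?thesis using up[of "Some a" None] that by (auto simp: ex_S0_above_iff)
  qed
  ultimately show "Some -` X \<in> L
     \<and> (None \<in> X \<longrightarrow> hi \<subseteq> Some -` X) \<and> (None \<notin> X \<longrightarrow> Some -` X \<subseteq> lo)"
    by auto
next
  assume X: "Some -` X \<in> L
     \<and> (None \<in> X \<longrightarrow> hi \<subseteq> Some -` X) \<and> (None \<notin> X \<longrightarrow> Some -` X \<subseteq> lo)"
  then have XP: "a \<in> P" if "Some a \<in> X" for a using that filter_subset_P by blast
  have "y \<in> X" if "x \<in> X" "y \<in> PK P" "leK P le lo hi x y" for x y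
    using that X
    by (cases x; cases y) (auto simp: XP ex_S0_above_iff ex_S1_below_iff intro: filter_up[of "Some -` X", simplified])
  moreover have "X \<subseteq> PK P" using X filter_subset_P[of "Some -` X"] by (simp add: subset_PK_iff)
  ultimately show "X \<in> LK" unfolding filters_def by blast
qed

lemma filters_PK_eq: "LK = glue None (image Some ` A) (image Some ` B)"
proof (rule set_eqI)
  fix X :: "'a option set"
  have free: "None \<notin> \<Union>(image Some ` A)" "None \<notin> \<Union>(image Some ` B)" by auto
  have "Some -` (X - {None}) = Some -` X" by auto
  then show "X \<in> LK \<longleftrightarrow> X \<in> glue None (image Some ` A) (image Some ` B)"
    by (simp add: filters_PK_iff mem_glue_iff[OF free] mem_image_Some_iff)
qed

lemma filters_P2_iff:
  "X \<in> L2 \<longleftrightarrow> Old -` X \<in> L \<and> (X1 \<in> X \<longrightarrow> X2 \<in> X)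
     \<and> (X2 \<in> X \<longrightarrow> hi \<subseteq> Old -` X) \<and> (X1 \<notin> X \<longrightarrow> Old -` X \<subseteq> lo)"
proof
  assume "X \<in> L2"
  then have sub: "Old -` X \<subseteq> P"
    and up: "\<And>x y. x \<in> X \<Longrightarrow> y \<in> P2 P \<Longrightarrow> le2 P le lo hi x y \<Longrightarrow> y \<in> X"
    unfolding filters_def subset_P2_iff by blast+
  have "Old b \<in> X" if "Old a \<in> X" "b \<in> P" "le a b" for a b
    using up[of "Old a" "Old b"] that by simp
  then have "Old -` X \<in> L" using sub unfolding filters_def by blast
  moreover have "Old b \<in> X" if "X2 \<in> X" "b \<in> hi" for b
  proof -
    have "b \<in> P" using that(2) filter_subset_P[OF hi_in_L] by blast
    then show ?thesis using up[of X2 "Old b"] that by (simp add: ex_S1_below_iff)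
  qed
  moreover have "a \<in> lo" if "X1 \<notin> X" "Old a \<in> X" for a
  proof -
    have "a \<in> P" using that(2) sub by blast
    then show ?thesis using up[of "Old a" X1] that by (auto simp: ex_S0_above_iff)
  qed
  ultimately show "Old -` X \<in> L \<and> (X1 \<in> X \<longrightarrow> X2 \<in> X)
     \<and> (X2 \<in> X \<longrightarrow> hi \<subseteq> Old -` X) \<and> (X1 \<notin> X \<longrightarrow> Old -` X \<subseteq> lo)"
    using up[of X1 X2] by auto
next
  assume X: "Old -` X \<in> L \<and> (X1 \<in> X \<longrightarrow> X2 \<in> X)
     \<and> (X2 \<in> X \<longrightarrow> hi \<subseteq> Old -` X) \<and> (X1 \<notin> X \<longrightarrow> Old -` X \<subseteq> lo)"
  then have XP: "a \<in> P" if "Old a \<in> X" for a using that filter_subset_P by blast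
  have "y \<in> X" if "x \<in> X" "y \<in> P2 P" "le2 P le lo hi x y" for x y
    using that X
    by (cases x; cases y) (auto simp: XP ex_S0_above_iff ex_S1_below_iff intro: filter_up[of "Old -` X", simplified])
  moreover have "X \<subseteq> P2 P" using X filter_subset_P[of "Old -` X"] by (simp add: subset_P2_iff)
  ultimately show "X \<in> L2" unfolding filters_def by blast
qed

lemma filters_P2_eq:
  "L2
     = glue X1 (glue X2 (image Old ` A) (image Old ` K)) (glue X2 {} (image Old ` B))"
proof (rule set_eqI)
  fix X :: "'a ext2 set"
  have free: "X1 \<notin> \<Union>(glue X2 (image Old ` A) (image Old ` K))" "X1 \<notin> \<Union>(glue X2 {} (image Old ` B))"
    "X2 \<notin> \<Union>(image Old ` A)" "X2 \<notin> \<Union>(image Old ` K)" "X2 \<notin> \<Union>(image Old ` B)" "X2 \<notin> \<Union>{}"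
    by (auto simp: glue_def)
  have "Old -` (X - {X1}) = Old -` X" "Old -` (X - {X1} - {X2}) = Old -` X"
    "Old -` (X - {X2}) = Old -` X" by auto
  then show "X \<in> L2
     \<longleftrightarrow> X \<in> glue X1 (glue X2 (image Old ` A) (image Old ` K)) (glue X2 {} (image Old ` B))"
    unfolding filters_P2_iff mem_glue_iff[OF free(1,2)] mem_glue_iff[OF free(3,4)]
      mem_glue_iff[OF free(6,5)]
    by (auto simp: mem_image_Old_iff K_eq)
qed

lemma stepwise_L: "stepwise L"
  using stepwise_filters[OF finite_P po] .

lemma stepwise_K: "stepwise K"
  by (rule stepwise_convex_subfamily[OF stepwise_L]) (auto simp: interval_F_def rev_incl_def)

lemma stepwise_LK: "stepwise LK"
  by (rule stepwise_filters[OF _ partial_order_PK]) (simp add: PK_def finite_P)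

lemma stepwise_L2: "stepwise L2"
  by (rule stepwise_filters[OF _ partial_order_P2]) (simp add: P2_def finite_P)

lemma card_filter_LK:
  "card {Y\<in>LK. Q Y} = card {G\<in>A. Q (Some ` G)} + card {G\<in>B. Q (insert None (Some ` G))}"
proof -
  have "card {Y\<in>LK. Q Y} = card {Y\<in>image Some ` A. Q Y} + card {Y\<in>image Some ` B. Q (insert None Y)}"
    unfolding filters_PK_eq using finite_L by (intro card_filter_glue) auto
  also have "\<dots> = card {G\<in>A. Q (Some ` G)} + card {G\<in>B. Q (insert None (Some ` G))}"
    by (simp add: card_filter_image inj_on_image_of_inj)
  finally show ?thesis .
qed

lemma card_filter_L2:
  "card {Y\<in>L2. Q Y} = card {G\<in>A. Q (Old ` G)} + card {G\<in>K. Q (insert X2 (Old ` G))}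
     + card {G\<in>B. Q (insert X1 (insert X2 (Old ` G)))}"
proof -
  have fin: "finite (image Old ` A)" "finite (image Old ` K)" "finite (image Old ` B)"
    using finite_L by (auto simp: interval_F_def)
  have "card {Y\<in>L2. Q Y}
      = card {Y\<in>glue X2 (image Old ` A) (image Old ` K). Q Y}
        + card {Y\<in>glue X2 {} (image Old ` B). Q (insert X1 Y)}"
    unfolding filters_P2_eq using fin by (intro card_filter_glue) (auto simp: glue_def)
  also have "\<dots> = card {Y\<in>image Old ` A. Q Y} + card {Y\<in>image Old ` K. Q (insert X2 Y)}
        + card {Y\<in>image Old ` B. Q (insert X1 (insert X2 Y))}"
    using fin by (subst (1 2) card_filter_glue) (auto simp: K_eq)
  also have "\<dots> = card {G\<in>A. Q (Old ` G)} + card {G\<in>K. Q (insert X2 (Old ` G))}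
     + card {G\<in>B. Q (insert X1 (insert X2 (Old ` G)))}"
    by (simp add: card_filter_image inj_on_image_of_inj inj_Old)
  finally show ?thesis .
qed

lemma set_deg_LK_lower:
  "G \<in> A \<Longrightarrow> set_deg LK (Some ` G) = set_deg A G + (if G \<in> K then 1 else 0)"
  unfolding filters_PK_eq
  by (auto simp: set_deg_glue_lower finite_Union_image finite_Union_A set_deg_image
      image_in_image_iff K_eq)

lemma card_removable_LK_lower: "card (removable LK (Some ` G)) = card (removable A G)"
  unfolding filters_PK_eq by (simp add: removable_glue_lower removable_image card_image)

lemma set_deg_LK_upper:
  "G \<in> B \<Longrightarrow> set_deg LK (insert None (Some ` G)) = set_deg B G + (if G \<in> K then 1 else 0)"
  unfolding filters_PK_eq
  by (auto simp: set_deg_glue_upper finite_filter set_deg_image image_in_image_iff K_eq)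

lemma card_removable_LK_upper:
  "G \<in> B \<Longrightarrow> card (removable LK (insert None (Some ` G))) = card (removable B G) + (if G \<in> K then 1 else 0)"
  unfolding filters_PK_eq
  by (auto simp: card_removable_glue_upper finite_filter removable_image card_image image_in_image_iff K_eq)

lemma X1_notin_Union_L2_parts:
  "X1 \<notin> \<Union>(glue X2 (image Old ` A) (image Old ` K))" "X1 \<notin> \<Union>(glue X2 {} (image Old ` B))"
  unfolding glue_def by auto

lemma finite_Union_L2_lower: "finite (\<Union>(glue X2 (image Old ` A) (image Old ` K)))"
  by (simp add: finite_Union_glue finite_Union_image finite_Union_A finite_Union_K)

lemma set_deg_L2_A:
  assumes "G \<in> A"
  shows "set_deg L2 (Old ` G) = set_deg A G + (if G \<in> K then 1 else 0)"
proof -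
  have "set_deg L2 (Old ` G) = set_deg (glue X2 (image Old ` A) (image Old ` K)) (Old ` G)
      + (if Old ` G \<in> glue X2 {} (image Old ` B) then 1 else 0)"
    unfolding filters_P2_eq
    by (rule set_deg_glue_lower[OF _ X1_notin_Union_L2_parts finite_Union_L2_lower]) simp
  also have "\<dots> = set_deg A G + (if G \<in> K then 1 else 0)"
    using assms by (simp add: set_deg_glue_lower mem_glue_lower set_deg_image image_in_image_iff inj_Old
        finite_Union_image finite_Union_A)
  finally show ?thesis .
qed

lemma set_deg_L2_K:
  assumes "G \<in> K"
  shows "set_deg L2 (insert X2 (Old ` G)) = set_deg K G + 2"
proof -
  have "set_deg L2 (insert X2 (Old ` G)) = set_deg (glue X2 (image Old ` A) (image Old ` K)) (insert X2 (Old ` G))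
      + (if insert X2 (Old ` G) \<in> glue X2 {} (image Old ` B) then 1 else 0)"
    unfolding filters_P2_eq
    by (rule set_deg_glue_lower[OF _ X1_notin_Union_L2_parts finite_Union_L2_lower]) simp
  also have "\<dots> = set_deg K G + 2"
    using assms K_eq by (simp add: set_deg_glue_upper mem_glue_upper set_deg_image image_in_image_iff inj_Old
        finite_filter)
  finally show ?thesis .
qed

lemma set_deg_L2_B:
  assumes "G \<in> B"
  shows "set_deg L2 (insert X1 (insert X2 (Old ` G))) = set_deg B G + (if G \<in> K then 1 else 0)"
proof -
  have "set_deg L2 (insert X1 (insert X2 (Old ` G))) = set_deg (glue X2 {} (image Old ` B)) (insert X2 (Old ` G))
      + (if insert X2 (Old ` G) \<in> glue X2 (image Old ` A) (image Old ` K) then 1 else 0)"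
    unfolding filters_P2_eq using assms
    by (intro set_deg_glue_upper[OF _ X1_notin_Union_L2_parts]) (auto simp: finite_filter)
  also have "\<dots> = set_deg B G + (if G \<in> K then 1 else 0)"
    using assms by (simp add: set_deg_glue_upper mem_glue_upper set_deg_image image_in_image_iff inj_Old
        finite_filter)
  finally show ?thesis .
qed

lemma removable_L_of_A: "G \<in> A \<Longrightarrow> removable L G = removable A G"
  unfolding removable_def by auto

lemma removable_B_of_K: "G \<in> K \<Longrightarrow> removable B G = removable K G"
  unfolding removable_def K_eq by auto

(* G contains a point z outside 0_K, which lies below every point of 1_K; so removing a point
   of 1_K from G does not leave a filter. *)
lemma removable_L_of_B_not_A:
  assumes "G \<in> B" "G \<notin> A"
  shows "removable L G = removable B G"
proof -
  obtain z where z: "z \<in> G" "z \<notin> lo" using assms by blast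
  have "hi \<subseteq> G - {f}" if f: "f \<in> G" "G - {f} \<in> L" for f
  proof -
    have "f \<notin> hi"
    proof
      assume "f \<in> hi"
      then have "le z f" using le_if_notin_lo_in_hi z filter_subset_P assms(1) by blast
      moreover have "z \<in> G - {f}" using z \<open>f \<in> hi\<close> hi_subset_lo by blast
      ultimately show False using filter_up[OF f(2)] f(1) filter_subset_P assms(1) by blast
    qed
    then show ?thesis using assms(1) by blast
  qed
  then show ?thesis unfolding removable_def by blast
qed

lemma d_num_L2:
  "d_num L2 rev_incl k = d_num LK rev_incl k + d_num K rev_incl (k - 2)"
proof -
  let ?cA = "card {G\<in>A. int (set_deg A G + (if G \<in> K then 1 else 0)) = k}"
  let ?cB = "card {G\<in>B. int (set_deg B G + (if G \<in> K then 1 else 0)) = k}"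
  have "card {G\<in>A. int (set_deg L2 (Old ` G)) = k} = ?cA"
    "card {G\<in>A. int (set_deg LK (Some ` G)) = k} = ?cA"
    by (rule card_filter_cong, simp add: set_deg_L2_A set_deg_LK_lower)+
  moreover have "card {G\<in>B. int (set_deg L2 (insert X1 (insert X2 (Old ` G)))) = k} = ?cB"
    "card {G\<in>B. int (set_deg LK (insert None (Some ` G))) = k} = ?cB"
    by (rule card_filter_cong, simp add: set_deg_L2_B set_deg_LK_upper)+
  moreover have "card {G\<in>K. int (set_deg L2 (insert X2 (Old ` G))) = k} = d_num K rev_incl (k - 2)"
    unfolding d_num_eq_card_set_deg[OF stepwise_K]
    by (rule card_filter_cong) (auto simp: set_deg_L2_K)
  ultimately show ?thesis
    unfolding d_num_eq_card_set_deg[OF stepwise_L2] d_num_eq_card_set_deg[OF stepwise_LK]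
      card_filter_L2 card_filter_LK
    by simp
qed

lemma d_minus_num_LK:
  "d_minus_num LK rev_incl k = d_minus_num L rev_incl k + d_minus_num K rev_incl (k - 1)"
proof -
  let ?Q = "\<lambda>G. int (card (removable L G)) = k"
  have fin: "finite A" "finite (B - A)" "finite K" using finite_L by (auto simp: interval_F_def)
  have "card {G\<in>A. int (card (removable LK (Some ` G))) = k} = card {G\<in>A. ?Q G}"
    by (rule card_filter_cong) (simp add: card_removable_LK_lower removable_L_of_A)
  moreover have "card {G\<in>B. int (card (removable LK (insert None (Some ` G)))) = k}
      = card {G\<in>B - A. ?Q G} + d_minus_num K rev_incl (k - 1)"
  proof -
    have "(B - A) \<union> K = B" using K_eq by blast
    moreover have "card {G\<in>(B - A) \<union> K. int (card (removable LK (insert None (Some ` G)))) = k}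
        = card {G\<in>B - A. int (card (removable LK (insert None (Some ` G)))) = k}
          + card {G\<in>K. int (card (removable LK (insert None (Some ` G)))) = k}"
      using fin K_eq by (intro card_filter_Un_disjoint) auto
    ultimately have "card {G\<in>B. int (card (removable LK (insert None (Some ` G)))) = k}
        = card {G\<in>B - A. int (card (removable LK (insert None (Some ` G)))) = k}
          + card {G\<in>K. int (card (removable LK (insert None (Some ` G)))) = k}"
      by (simp only:)
    also have "card {G\<in>B - A. int (card (removable LK (insert None (Some ` G)))) = k} = card {G\<in>B - A. ?Q G}"
      using K_eq by (intro card_filter_cong) (simp add: card_removable_LK_upper removable_L_of_B_not_A)
    also have "card {G\<in>K. int (card (removable LK (insert None (Some ` G)))) = k} = d_minus_num K rev_incl (k - 1)"
      unfolding d_minus_num_eq_card_removable[OF stepwise_K] using K_eq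
      by (intro card_filter_cong) (auto simp: card_removable_LK_upper removable_B_of_K)
    finally show ?thesis .
  qed
  moreover have "d_minus_num L rev_incl k = card {G\<in>A. ?Q G} + card {G\<in>B - A. ?Q G}"
  proof -
    have "A \<union> (B - A) = L" using L_eq by blast
    moreover have "card {G\<in>A \<union> (B - A). ?Q G} = card {G\<in>A. ?Q G} + card {G\<in>B - A. ?Q G}"
      using fin by (intro card_filter_Un_disjoint) auto
    ultimately show ?thesis
      unfolding d_minus_num_eq_card_removable[OF stepwise_L] by (simp only:)
  qed
  ultimately show ?thesis
    unfolding d_minus_num_eq_card_removable[OF stepwise_LK] card_filter_LK by simp
qed

end

theorem theorem5:
  fixes P :: "'a set" and le :: "'a \<Rightarrow> 'a \<Rightarrow> bool" and lo hi :: "'a set" and k :: int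
  assumes "finite P"
    and "partial_order_on' P le"
    and "cutting P le lo hi"
  shows "d_num (filters (P2 P) (le2 P le lo hi)) rev_incl k =
           d_num (filters (PK P) (leK P le lo hi)) rev_incl k
           + d_num (interval_F P le lo hi) rev_incl (k - 2)
       \<and> d_minus_num (filters (PK P) (leK P le lo hi)) rev_incl k =
           d_minus_num (filters P le) rev_incl k
           + d_minus_num (interval_F P le lo hi) rev_incl (k - 1)"
proof -
  interpret poset_cutting P le lo hi using assms by unfold_locales
  show ?thesis using d_num_L2 d_minus_num_LK by blast
qed

end
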